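(* Let $\rho$ be a density operator, $O$ a Hermitian observable, $V$ a unitary and $H$ a Hermitian operator on a finite-dimensional Hilbert space. For $\theta\in\mathbb{R}$ let $\mathcal{U}_\theta(X)=e^{i\theta H}Xe^{-i\theta H}$ and $\mathcal{L}(\theta)=\operatorname{Tr}[\rho\,\mathcal{U}_\theta(V^\dagger OV)]$. Let $\phi\in\mathbb{R}$ and $r>0$ with $r\le\frac{3}{4\omega^{(\max)}(H)}$. Then $$\operatorname{Var}_{\theta\sim\mathcal{U}(\phi,r)}[\mathcal{L}(\theta)]\ge\frac{r^4}{45}\operatorname{Tr}[\rho\,\mathcal{U}^{(2)}_\phi(V^\dagger OV)]^2-\frac{2\,\omega^{(\max)}(H)^2\,\big\|[H,[H,e^{i\phi H}V^\dagger OVe^{-i\phi H}]]\big\|_\infty^2}{135}r^6,$$ where $\mathcal{U}^{(2)}_\phi(X)=\frac{d^2}{d\theta^2}\mathcal{U}_\theta(X)\big|_{\theta=\phi}$.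
   Context: $\omega^{(\max)}(H)=\lambda_{\max}(H)-\lambda_{\min}(H)$ (difference of largest and smallest eigenvalue). $\|\cdot\|_\infty$ is the operator norm. $\mathcal{U}(\phi,r)$ is the uniform distribution on $[\phi-r,\phi+r]$. *)

theory Defs
  imports "HOL-Analysis.Analysis" "HOL-Probability.Probability"
begin

type_synonym 'n cmat = "complex^'n^'n"

definition cadjoint :: "'n::finite cmat \<Rightarrow> 'n cmat" where
  "cadjoint A = (\<chi> i j. cnj (A $ j $ i))"

definition cscale :: "complex \<Rightarrow> 'n::finite cmat \<Rightarrow> 'n cmat" where
  "cscale c A = (\<chi> i j. c * A $ i $ j)"

primrec matpow :: "'n::finite cmat \<Rightarrow> nat \<Rightarrow> 'n cmat" where
  "matpow A 0 = mat 1"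
| "matpow A (Suc k) = A ** matpow A k"

definition mexp :: "'n::finite cmat \<Rightarrow> 'n cmat" where
  "mexp A = (\<Sum>k. (1 / fact k) *\<^sub>R matpow A k)"

definition hermitian :: "'n::finite cmat \<Rightarrow> bool" where
  "hermitian A \<longleftrightarrow> cadjoint A = A"

definition unitary :: "'n::finite cmat \<Rightarrow> bool" where
  "unitary U \<longleftrightarrow> cadjoint U ** U = mat 1 \<and> U ** cadjoint U = mat 1"

definition density_op :: "'n::finite cmat \<Rightarrow> bool" where
  "density_op \<rho> \<longleftrightarrow> hermitian \<rho>
     \<and> (\<forall>v::complex^'n. 0 \<le> Re (\<Sum>i\<in>UNIV. cnj (v $ i) * (\<rho> *v v) $ i))
     \<and> trace \<rho> = 1"

definition commutator :: "'n::finite cmat \<Rightarrow> 'n cmat \<Rightarrow> 'n cmat" where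
  "commutator A B = A ** B - B ** A"

text \<open>Real eigenvalues of a matrix (all eigenvalues, for Hermitian matrices).\<close>
definition real_eigenvalues :: "'n::finite cmat \<Rightarrow> real set" where
  "real_eigenvalues A = {l. \<exists>v::complex^'n. v \<noteq> 0 \<and> A *v v = complex_of_real l *s v}"

definition omega_max :: "'n::finite cmat \<Rightarrow> real" where
  "omega_max H = Max (real_eigenvalues H) - Min (real_eigenvalues H)"

definition opnorm :: "'n::finite cmat \<Rightarrow> real" where
  "opnorm A = onorm (\<lambda>x::complex^'n. A *v x)"

definition conjU :: "'n::finite cmat \<Rightarrow> real \<Rightarrow> 'n cmat \<Rightarrow> 'n cmat" where
  "conjU H \<theta> X = mexp (cscale (\<i> * of_real \<theta>) H) ** X ** mexp (cscale (- \<i> * of_real \<theta>) H)"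

definition conjU2 :: "'n::finite cmat \<Rightarrow> real \<Rightarrow> 'n cmat \<Rightarrow> 'n cmat" where
  "conjU2 H \<phi> X = vector_derivative (\<lambda>t. vector_derivative (\<lambda>s. conjU H s X) (at t)) (at \<phi>)"

definition unif_var :: "real \<Rightarrow> real \<Rightarrow> (real \<Rightarrow> real) \<Rightarrow> real" where
  "unif_var \<phi> r f = prob_space.variance (uniform_measure lborel {\<phi> - r..\<phi> + r}) f"

end

theory Submission
  imports Defs
begin

(*
  Diagonalise H = U diag(l) U^dagger. In this eigenbasis U_theta(X) has entries
  Y_jk cis (theta (l_j - l_k)) with Y = U^dagger X U, so L is smooth and its m-th derivative is
  Re Tr [rho U M_m(theta) U^dagger], where M_m(theta) multiplies these entries by (i (l_j - l_k))^m.
  For a density operator |Re Tr (rho B)| <= ||B||; multiplying the entries by i (l_j - l_k) is a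
  commutator with a diagonal matrix, so it stretches the operator norm by at most
  omega = max l - min l; and M_m(theta) is a diagonal unitary conjugate of M_m(phi). Hence
  |L''(phi)| <= N and |L''''| <= omega^2 N, where N = ||[H, [H, U_phi(X)]]|| = ||M_2(phi)||.

  Write L as its cubic Taylor polynomial at phi plus a remainder of size at most
  omega^2 N (theta - phi)^4 / 24, and test L against h = (theta - phi)^2 - r^2 / 3, which on
  [phi - r, phi + r] is orthogonal to constants and to odd powers of theta - phi. Integrating
  (L - mu)^2 >= c (L - mu) h - (c h / 2)^2, with mu the mean of L and c = L''(phi), gives
  Var L >= r^4 L''(phi)^2 / 45 - omega^2 N^2 r^6 / 180.
*)

section \<open>The complex inner product and unitary matrices\<close>

definition cinner :: "complex^'n::finite \<Rightarrow> complex^'n \<Rightarrow> complex" where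
  "cinner x y = (\<Sum>i\<in>UNIV. cnj (x $ i) * y $ i)"

definition diag_mat :: "('n::finite \<Rightarrow> complex) \<Rightarrow> 'n cmat" where
  "diag_mat d = (\<chi> i j. if i = j then d i else 0)"

lemma cadjoint_nth [simp]: "cadjoint A $ i $ j = cnj (A $ j $ i)"
  by (simp add: cadjoint_def)

lemma cadjoint_cadjoint [simp]: "cadjoint (cadjoint A) = A"
  by (simp add: vec_eq_iff)

lemma cadjoint_mat_1 [simp]: "cadjoint (mat 1) = mat 1"
  by (simp add: vec_eq_iff mat_def)

lemma diag_mat_nth [simp]: "diag_mat d $ i $ j = (if i = j then d i else 0)"
  by (simp add: diag_mat_def)

lemma diag_mat_mult_left: "(diag_mat d ** A) $ i $ j = d i * A $ i $ j"
  by (simp add: matrix_matrix_mult_def if_distrib[of "\<lambda>c. c * _"] cong: if_cong)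

lemma diag_mat_mult_right: "(A ** diag_mat d) $ i $ j = A $ i $ j * d j"
  by (simp add: matrix_matrix_mult_def if_distrib[of "\<lambda>c. _ * c"] cong: if_cong)

lemma diag_mat_mult_vec: "(diag_mat d *v x) $ i = d i * x $ i"
  by (simp add: matrix_vector_mult_def if_distrib[of "\<lambda>c. c * _"] cong: if_cong)

lemma diag_mat_mult_diag_mat: "diag_mat d ** diag_mat e = diag_mat (\<lambda>i. d i * e i)"
  by (simp add: vec_eq_iff diag_mat_mult_left)

lemma diag_mat_1: "diag_mat (\<lambda>i. 1) = mat 1"
  by (simp add: vec_eq_iff mat_def)

lemma cadjoint_diag_mat: "cadjoint (diag_mat d) = diag_mat (\<lambda>i. cnj (d i))"
  by (simp add: vec_eq_iff)

lemma trace_diag_mat_mult: "trace (diag_mat d ** A) = (\<Sum>i\<in>UNIV. d i * A $ i $ i)"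
  by (simp add: trace_def diag_mat_mult_left)

lemma unitaryD:
  assumes "unitary U" shows "cadjoint U ** U = mat 1" "U ** cadjoint U = mat 1"
  using assms by (auto simp: unitary_def)

lemma unitary_cadjoint: "unitary U \<Longrightarrow> unitary (cadjoint U)"
  by (simp add: unitary_def)

lemma unitary_conj_cadjoint:
  assumes "unitary U"
  shows "cadjoint U ** (U ** A ** cadjoint U) ** U = A"
proof -
  have "cadjoint U ** (U ** A ** cadjoint U) ** U = (cadjoint U ** U) ** A ** (cadjoint U ** U)"
    by (simp add: matrix_mul_assoc)
  then show ?thesis
    using unitaryD[OF assms] by (simp add: matrix_mul_lid matrix_mul_rid)
qed

lemma unitary_diag_mat_cis: "unitary (diag_mat (\<lambda>j. cis (x j)))"
  by (simp add: unitary_def cadjoint_diag_mat diag_mat_mult_diag_mat diag_mat_1 cis_cnj cis_mult)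

lemma cinner_mult_vec_left: "cinner (A *v x) y = cinner x (cadjoint A *v y)"
  by (simp add: cinner_def matrix_vector_mult_def sum_distrib_left sum_distrib_right mult_ac)
     (rule sum.swap)

lemma cnj_cinner: "cnj (cinner x y) = cinner y x"
  by (simp add: cinner_def mult.commute)

lemma of_real_norm_power2_eq_cinner: "complex_of_real ((norm x)\<^sup>2) = cinner x x"
  by (simp add: norm_vec_def L2_set_def sum_nonneg cinner_def complex_norm_square mult.commute
      flip: of_real_power)

lemma cinner_hermitian: "hermitian A \<Longrightarrow> cinner x (A *v y) = cinner (A *v x) y"
  unfolding hermitian_def by (metis cinner_mult_vec_left)

lemma Im_cinner_hermitian: "hermitian A \<Longrightarrow> Im (cinner x (A *v x)) = 0"
  by (metis Reals_cnj_iff cnj_cinner cinner_hermitian complex_is_Real_iff)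

lemma norm_mult_vec_unitary:
  assumes "cadjoint U ** U = mat 1"
  shows "norm (U *v x) = norm x"
proof -
  have "cinner (U *v x) (U *v x) = cinner x x"
    by (simp add: cinner_mult_vec_left matrix_vector_mul_assoc assms)
  then show ?thesis
    by (metis of_real_norm_power2_eq_cinner of_real_eq_iff power2_eq_iff_nonneg norm_ge_zero)
qed

lemma cadjoint_sandwich_nth:
  "(cadjoint U ** A ** U) $ p $ q = cinner (column p U) (A *v column q U)"
  by (simp add: matrix_matrix_mult_def matrix_vector_mult_def cinner_def column_def
      sum_distrib_left sum_distrib_right mult_ac) (rule sum.swap)

lemma cinner_add_left: "cinner (x + y) z = cinner x z + cinner y z"
  and cinner_add_right: "cinner z (x + y) = cinner z x + cinner z y"
  and cinner_diff_left: "cinner (x - y) z = cinner x z - cinner y z"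
  and cinner_diff_right: "cinner z (x - y) = cinner z x - cinner z y"
  and cinner_scale_left: "cinner (c *s x) z = cnj c * cinner x z"
  and cinner_scale_right: "cinner z (c *s x) = c * cinner z x"
  by (simp_all add: cinner_def sum.distrib sum_subtractf ring_distribs sum_distrib_left mult_ac)

lemma matrix_vector_mult_scale: "A *v (c *s x) = c *s (A *v (x::complex^'n::finite))"
  by (simp add: vec_eq_iff matrix_vector_mult_def sum_distrib_left mult_ac)

lemmas cinner_sesquilinear =
  cinner_add_left cinner_add_right cinner_diff_left cinner_diff_right
  cinner_scale_left cinner_scale_right matrix_vector_mult_scale
  matrix_vector_right_distrib matrix_vector_mult_diff_distrib

lemma cadjoint_mult_self_nth: "(cadjoint U ** U) $ p $ q = cinner (column p U) (column q U)"
  by (simp add: matrix_matrix_mult_def cinner_def column_def)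

section \<open>Spectral theorem for Hermitian matrices\<close>

lemma norm_le_sum_norm_nth: "norm (x::'a::real_normed_vector^'n::finite) \<le> (\<Sum>i\<in>UNIV. norm (x $ i))"
  unfolding norm_vec_def by (rule L2_set_le_sum) simp

lemma compact_isometries: "compact {U::'n::finite cmat. cadjoint U ** U = mat 1}"
proof (rule compact_eq_bounded_closed[THEN iffD2], intro conjI)
  have entry_le_1: "norm (U $ i $ j) \<le> 1" if "cadjoint U ** U = mat 1" for U :: "'n cmat" and i j
  proof -
    have "complex_of_real ((norm (column j U))\<^sup>2) = 1"
      using that cadjoint_mult_self_nth[of U j j]
      by (simp add: of_real_norm_power2_eq_cinner mat_def del: of_real_power)
    then have "(norm (column j U))\<^sup>2 = 1"
      by (simp only: of_real_eq_1_iff)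
    then have "norm (column j U) = 1"
      using norm_ge_zero[of "column j U"] by (auto simp: power2_eq_1_iff)
    then show ?thesis
      using Finite_Cartesian_Product.norm_nth_le[of "column j U" i] by (simp add: column_def)
  qed
  then have "norm U \<le> real CARD('n) * real CARD('n)" if "cadjoint U ** U = mat 1" for U :: "'n cmat"
  proof -
    have "norm U \<le> (\<Sum>i\<in>UNIV. \<Sum>j\<in>UNIV. norm (U $ i $ j))"
      by (intro order_trans[OF norm_le_sum_norm_nth] sum_mono norm_le_sum_norm_nth)
    also have "\<dots> \<le> (\<Sum>i\<in>(UNIV::'n set). \<Sum>j\<in>(UNIV::'n set). 1)"
      by (intro sum_mono) (use that in \<open>rule entry_le_1\<close>)
    finally show ?thesis
      by simp
  qed
  then show "bounded {U::'n cmat. cadjoint U ** U = mat 1}"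
    unfolding bounded_iff by blast
  have "{U::'n cmat. cadjoint U ** U = mat 1} =
      (\<Inter>a. \<Inter>b. {U. (\<Sum>k\<in>UNIV. cnj (U $ k $ a) * U $ k $ b) = mat 1 $ a $ b})"
    by (auto simp: vec_eq_iff matrix_matrix_mult_def)
  moreover have "closed {U::'n cmat. (\<Sum>k\<in>UNIV. cnj (U $ k $ a) * U $ k $ b) = mat 1 $ a $ b}"
    for a b
    by (intro closed_Collect_eq continuous_intros)
  ultimately show "closed {U::'n cmat. cadjoint U ** U = mat 1}"
    by (auto intro!: closed_INT)
qed

(*
  Variational proof: for pairwise distinct weights c, a unitary U maximising weighted_rayleigh A c
  diagonalises A, since rotating two columns u_p, u_q with <u_p, A u_q> /= 0 by a small angle
  would increase it.
*)

definition rotate_columns :: "'n::finite cmat \<Rightarrow> 'n \<Rightarrow> 'n \<Rightarrow> complex \<Rightarrow> real \<Rightarrow> 'n cmat" where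
  "rotate_columns U p q w s = (\<chi> i j.
     (if j = p then
        complex_of_real (1 / sqrt (1 + s\<^sup>2)) *s (column p U + (of_real s * w) *s column q U)
      else if j = q then
        complex_of_real (1 / sqrt (1 + s\<^sup>2)) *s (column q U - (of_real s * cnj w) *s column p U)
      else column j U) $ i)"

lemma column_rotate_columns:
  "column j (rotate_columns U p q w s) =
     (if j = p then
        complex_of_real (1 / sqrt (1 + s\<^sup>2)) *s (column p U + (of_real s * w) *s column q U)
      else if j = q then
        complex_of_real (1 / sqrt (1 + s\<^sup>2)) *s (column q U - (of_real s * cnj w) *s column p U)
      else column j U)"
  by (simp add: rotate_columns_def column_def vec_eq_iff)

lemma inverse_sqrt_one_plus_square:
  "complex_of_real (1 / sqrt (1 + s\<^sup>2)) * complex_of_real (1 / sqrt (1 + s\<^sup>2)) *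
     (1 + of_real s * of_real s) = 1"
proof -
  have "(1 / sqrt (1 + s\<^sup>2)) * (1 / sqrt (1 + s\<^sup>2)) * (1 + s * s) = 1"
    using add_pos_nonneg[OF zero_less_one zero_le_square[of s]]
    by (simp add: power2_eq_square flip: real_sqrt_mult)
  then show ?thesis
    by (metis of_real_1 of_real_add of_real_mult)
qed

lemma isometry_rotate_columns:
  assumes U: "cadjoint U ** U = mat 1" and pq: "p \<noteq> q" and w: "cnj w * w = 1"
  shows "cadjoint (rotate_columns U p q w s) ** rotate_columns U p q w s = mat 1"
proof -
  define t where "t = complex_of_real (1 / sqrt (1 + s\<^sup>2))"
  have tt: "t * t * (1 + of_real s * of_real s) = 1"
    unfolding t_def by (rule inverse_sqrt_one_plus_square)
  have ct: "cnj t = t"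
    by (simp add: t_def)
  have o: "cinner (column a U) (column b U) = (if a = b then 1 else 0)" for a b
    using U cadjoint_mult_self_nth[of U a b] by (simp add: mat_def)
  let ?R = "rotate_columns U p q w s"
  note col = column_rotate_columns[of _ U p q w s, folded t_def]
  have "cinner (column a ?R) (column b ?R) = (if a = b then 1 else 0)" for a b
  proof -
    consider "a = b" "a \<in> {p, q}" | "a \<noteq> b" "a \<in> {p, q}" "b \<in> {p, q}"
      | "a \<notin> {p, q} \<or> b \<notin> {p, q}"
      by blast
    then show ?thesis
    proof cases
      case 1
      then have "cinner (column a ?R) (column b ?R) =
          t * t * (1 + of_real s * of_real s * (cnj w * w))"
        using pq by (auto simp: col cinner_sesquilinear o ct algebra_simps)
      then show ?thesis
        using 1 tt w by simp
    next
      case 2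
      then show ?thesis
        using pq by (auto simp: col cinner_sesquilinear o ct algebra_simps)
    next
      case 3
      then show ?thesis
        using pq by (auto simp: col cinner_sesquilinear o)
    qed
  qed
  then show ?thesis
    by (simp add: vec_eq_iff cadjoint_mult_self_nth mat_def)
qed

definition weighted_rayleigh :: "'n::finite cmat \<Rightarrow> ('n \<Rightarrow> real) \<Rightarrow> 'n cmat \<Rightarrow> real" where
  "weighted_rayleigh A c U = (\<Sum>j\<in>UNIV. c j * Re (cinner (column j U) (A *v column j U)))"

lemma continuous_on_weighted_rayleigh: "continuous_on S (weighted_rayleigh A c)"
  unfolding weighted_rayleigh_def cinner_def column_def matrix_vector_mult_def
  by (intro continuous_intros)

lemma weighted_rayleigh_rotate_columns:
  fixes A U :: "'n::finite cmat"
  assumes A: "hermitian A" and pq: "p \<noteq> q" and w: "cnj w * w = 1"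
  defines "a \<equiv> \<lambda>j k. cinner (column j U) (A *v column k U)"
  shows "weighted_rayleigh A c (rotate_columns U p q w s) - weighted_rayleigh A c U =
     (c p - c q) * (s\<^sup>2 * (Re (a q q) - Re (a p p)) + 2 * s * Re (w * a p q)) / (1 + s\<^sup>2)"
proof -
  define t where "t = complex_of_real (1 / sqrt (1 + s\<^sup>2))"
  define \<kappa> where "\<kappa> = 1 / (1 + s\<^sup>2)"
  have "(1 / sqrt (1 + s\<^sup>2)) * (1 / sqrt (1 + s\<^sup>2)) = \<kappa>"
    by (simp add: \<kappa>_def add_nonneg_nonneg)
  then have t: "t * t = of_real \<kappa>"
    unfolding t_def by (metis of_real_mult)
  have ct: "cnj t = t"
    by (simp add: t_def)
  note col = column_rotate_columns[of _ U p q w s, folded t_def]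
  have a: "cinner (column j U) (A *v column k U) = a j k" for j k
    by (simp add: a_def)
  have a_qp: "a q p = cnj (a p q)"
    unfolding a_def by (metis cnj_cinner cinner_hermitian[OF A])
  let ?R = "rotate_columns U p q w s"
  have Ep: "cinner (column p ?R) (A *v column p ?R) = t * t * (a p p + of_real s * w * a p q
      + of_real s * cnj w * cnj (a p q) + of_real s * of_real s * (cnj w * w) * a q q)"
    using pq by (simp add: col cinner_sesquilinear ct a a_qp) (simp add: algebra_simps)
  have Rp: "Re (cinner (column p ?R) (A *v column p ?R)) =
      \<kappa> * (Re (a p p) + s * s * Re (a q q) + 2 * s * Re (w * a p q))"
    unfolding Ep w t by (simp add: algebra_simps)
  have Eq: "cinner (column q ?R) (A *v column q ?R) = t * t * (a q q - of_real s * w * a p q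
      - of_real s * cnj w * cnj (a p q) + of_real s * of_real s * (cnj w * w) * a p p)"
    using pq by (simp add: col cinner_sesquilinear ct a a_qp) (simp add: algebra_simps)
  have Rq: "Re (cinner (column q ?R) (A *v column q ?R)) =
      \<kappa> * (Re (a q q) + s * s * Re (a p p) - 2 * s * Re (w * a p q))"
    unfolding Eq w t by (simp add: algebra_simps)
  have "weighted_rayleigh A c ?R - weighted_rayleigh A c U =
      (\<Sum>j\<in>UNIV. c j * (Re (cinner (column j ?R) (A *v column j ?R)) - Re (a j j)))"
    by (simp add: weighted_rayleigh_def a sum_subtractf right_diff_distrib)
  also have "\<dots> = (\<Sum>j\<in>{p, q}. c j * (Re (cinner (column j ?R) (A *v column j ?R)) - Re (a j j)))"
    by (rule sum.mono_neutral_right) (auto simp: col a)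
  also have "\<dots> = (c p - c q) * (s\<^sup>2 * (Re (a q q) - Re (a p p)) + 2 * s * Re (w * a p q)) * \<kappa>"
  proof -
    have "\<kappa> * (1 + s * s) = 1"
      using add_pos_nonneg[OF zero_less_one zero_le_square[of s]]
      by (simp add: \<kappa>_def power2_eq_square)
    then have "(\<kappa> + \<kappa> * (s * s)) * (c p * Re (a p p) + c q * Re (a q q)) =
        c p * Re (a p p) + c q * Re (a q q)"
      by (simp add: algebra_simps)
    then show ?thesis
      using pq by (simp add: Rp Rq algebra_simps power2_eq_square)
  qed
  finally show ?thesis
    by (simp add: \<kappa>_def)
qed

lemma quadratic_nonpos_imp_linear_coeff_eq_0:
  fixes u v :: real
  assumes "\<And>s. v * s\<^sup>2 + 2 * u * s \<le> 0"
  shows "u = 0"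
proof (rule ccontr)
  assume "u \<noteq> 0"
  define d where "d = \<bar>v\<bar> + 1"
  have "d > 0"
    by (simp add: d_def)
  then have "v * (u / d)\<^sup>2 + 2 * u * (u / d) = (u / d)\<^sup>2 * (v + 2 * d)"
    by (simp add: field_simps power2_eq_square)
  also have "\<dots> > 0"
    using \<open>u \<noteq> 0\<close> by (intro mult_pos_pos) (auto simp: d_def)
  finally show False
    using assms[of "u / d"] by simp
qed

lemma cinner_offdiag_eq_0_if_maximizer:
  fixes A U :: "'n::finite cmat"
  assumes A: "hermitian A" and c: "inj c" and U: "cadjoint U ** U = mat 1"
    and max: "\<And>V. cadjoint V ** V = mat 1 \<Longrightarrow> weighted_rayleigh A c V \<le> weighted_rayleigh A c U"
    and pq: "p \<noteq> q"
  shows "cinner (column p U) (A *v column q U) = 0"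
proof -
  define b where "b = cinner (column p U) (A *v column q U)"
  define e where
    "e = Re (cinner (column q U) (A *v column q U)) - Re (cinner (column p U) (A *v column p U))"
  have "Re (w * b) = 0" if w: "cnj w * w = 1" for w
  proof -
    have le: "(c p - c q) * (s\<^sup>2 * e + 2 * s * Re (w * b)) / (1 + s\<^sup>2) \<le> 0" for s
      using max[OF isometry_rotate_columns[OF U pq w, of s]]
        weighted_rayleigh_rotate_columns[OF A pq w, of c U s]
      by (simp add: b_def e_def)
    have "(c p - c q) * (s\<^sup>2 * e + 2 * s * Re (w * b)) \<le> 0" for s
      using le[of s] add_pos_nonneg[OF zero_less_one zero_le_power2[of s]]
      by (auto simp: divide_le_0_iff)
    then have "((c p - c q) * e) * s\<^sup>2 + 2 * ((c p - c q) * Re (w * b)) * s \<le> 0" for s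
      by (simp add: algebra_simps)
    then have "(c p - c q) * Re (w * b) = 0"
      by (rule quadratic_nonpos_imp_linear_coeff_eq_0)
    then show ?thesis
      using c pq by (auto dest: injD)
  qed
  from this[of 1] this[of "\<i>"] show ?thesis
    by (simp add: b_def complex_eq_iff)
qed

theorem hermitian_unitary_diagonalization:
  fixes A :: "'n::finite cmat"
  assumes A: "hermitian A"
  obtains U l where "unitary U" and "A = U ** diag_mat (\<lambda>i. complex_of_real (l i)) ** cadjoint U"
proof -
  define c :: "'n \<Rightarrow> real" where "c j = real (to_nat j)" for j
  have c: "inj c"
    by (metis c_def injI inj_eq inj_to_nat of_nat_eq_iff)
  have "mat 1 \<in> {U::'n cmat. cadjoint U ** U = mat 1}"
    by (simp add: matrix_mul_lid)
  then obtain U where U: "cadjoint U ** U = mat 1"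
    and max: "\<And>V. cadjoint V ** V = mat 1 \<Longrightarrow> weighted_rayleigh A c V \<le> weighted_rayleigh A c U"
    using continuous_attains_sup[OF compact_isometries _ continuous_on_weighted_rayleigh] by blast
  define l where "l j = Re (cinner (column j U) (A *v column j U))" for j
  have "cadjoint U ** A ** U = diag_mat (\<lambda>j. complex_of_real (l j))"
    using cinner_offdiag_eq_0_if_maximizer[OF A c U max] Im_cinner_hermitian[OF A]
    by (auto simp: vec_eq_iff cadjoint_sandwich_nth l_def complex_eq_iff)
  moreover have U': "U ** cadjoint U = mat 1"
    using U matrix_left_right_inverse by blast
  ultimately have "A = U ** diag_mat (\<lambda>j. complex_of_real (l j)) ** cadjoint U"
    by (metis matrix_mul_assoc matrix_mul_lid matrix_mul_rid)
  with U U' show ?thesis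
    by (intro that[of U l]) (auto simp: unitary_def)
qed

section \<open>Operator norm\<close>

lemma norm_mult_vec_le_opnorm: "norm (A *v x) \<le> opnorm A * norm (x::complex^'n::finite)"
  unfolding opnorm_def by (rule onorm[OF matrix_vector_mul_bounded_linear])

lemma opnorm_le: "(\<And>x. norm (A *v x) \<le> c * norm (x::complex^'n::finite)) \<Longrightarrow> opnorm A \<le> c"
  unfolding opnorm_def by (rule onorm_le)

lemma opnorm_nonneg: "0 \<le> opnorm (A::'n::finite cmat)"
  unfolding opnorm_def by (rule onorm_pos_le[OF matrix_vector_mul_bounded_linear])

lemma opnorm_mult_le: "opnorm (A ** B) \<le> opnorm A * opnorm (B::'n::finite cmat)"
proof -
  have "(*v) (A ** B) = (*v) A \<circ> (*v) B"
    by (simp add: fun_eq_iff matrix_vector_mul_assoc)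
  then show ?thesis
    unfolding opnorm_def by (metis onorm_compose matrix_vector_mul_bounded_linear)
qed

lemma opnorm_uminus: "opnorm (- A) = opnorm (A::'n::finite cmat)"
proof -
  have "(*v) (- A) = (\<lambda>x. - (A *v x))"
    by (simp add: fun_eq_iff vec_eq_iff matrix_vector_mult_def sum_negf)
  then show ?thesis
    unfolding opnorm_def by (simp add: onorm_neg)
qed

lemma opnorm_diff_le: "opnorm (A - B) \<le> opnorm A + opnorm (B::'n::finite cmat)"
proof -
  have "(*v) (A - B) = (\<lambda>x. A *v x + (- B) *v x)"
    by (simp add: fun_eq_iff matrix_vector_mult_diff_rdistrib
        matrix_vector_mult_add_rdistrib[symmetric])
  then show ?thesis
    using onorm_triangle[OF matrix_vector_mul_bounded_linear matrix_vector_mul_bounded_linear,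
        of A "- B"] opnorm_uminus[of B]
    unfolding opnorm_def by simp
qed

lemma opnorm_isometry_le_1: "cadjoint U ** U = mat 1 \<Longrightarrow> opnorm (U::'n::finite cmat) \<le> 1"
  by (rule opnorm_le) (simp add: norm_mult_vec_unitary)

lemma opnorm_unitary_conj:
  assumes "unitary U"
  shows "opnorm (U ** A ** cadjoint U) = opnorm A"
proof -
  have le: "opnorm (V ** B ** cadjoint V) \<le> opnorm B" if "unitary V" for V B :: "'a::finite cmat"
  proof -
    have "opnorm (V ** B ** cadjoint V) \<le> opnorm V * opnorm B * opnorm (cadjoint V)"
      by (meson opnorm_mult_le opnorm_nonneg order_trans mult_right_mono)
    also have "\<dots> \<le> 1 * opnorm B * 1"
      using that by (intro mult_mono opnorm_isometry_le_1 opnorm_nonneg mult_nonneg_nonneg)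
        (auto simp: unitary_def)
    finally show ?thesis
      by simp
  qed
  have "opnorm A \<le> opnorm (U ** A ** cadjoint U)"
    using le[OF unitary_cadjoint[OF assms], of "U ** A ** cadjoint U"]
    by (simp add: unitary_conj_cadjoint[OF assms])
  with le[OF assms, of A] show ?thesis
    by linarith
qed

lemma norm_nth_le_opnorm: "norm (A $ i $ j) \<le> opnorm (A::'n::finite cmat)"
proof -
  have "norm (A $ i $ j) \<le> norm (A *v axis j 1)"
    using Finite_Cartesian_Product.norm_nth_le[of "A *v axis j 1" i]
    by (simp add: matrix_vector_mult_def axis_def if_distrib cong: if_cong)
  also have "\<dots> \<le> opnorm A"
  proof -
    have "norm (axis j 1 :: complex^'n) = 1"
      by (rule norm_Basis) (auto simp: Basis_vec_def)
    then show ?thesis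
      using norm_mult_vec_le_opnorm[of A "axis j 1"] by simp
  qed
  finally show ?thesis .
qed

lemma opnorm_diag_mat_le:
  fixes d :: "'n::finite \<Rightarrow> complex"
  assumes "\<And>i. norm (d i) \<le> C"
  shows "opnorm (diag_mat d) \<le> C"
proof (rule opnorm_le)
  fix x :: "complex^'n"
  have "C \<ge> 0"
    using assms norm_ge_zero order_trans by blast
  have "(norm (diag_mat d *v x))\<^sup>2 = (\<Sum>i\<in>UNIV. (norm (d i) * norm (x $ i))\<^sup>2)"
    by (simp add: norm_vec_def L2_set_def sum_nonneg diag_mat_mult_vec norm_mult)
  also have "\<dots> \<le> (\<Sum>i\<in>UNIV. (C * norm (x $ i))\<^sup>2)"
    by (intro sum_mono power_mono mult_right_mono assms) auto
  also have "\<dots> = (C * norm x)\<^sup>2"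
    by (simp add: norm_vec_def L2_set_def sum_nonneg power_mult_distrib sum_distrib_left)
  finally show "norm (diag_mat d *v x) \<le> C * norm x"
    using \<open>C \<ge> 0\<close> by (simp add: power2_le_iff_abs_le)
qed

lemma opnorm_diag_commutator_le:
  fixes A :: "'n::finite cmat"
  assumes l: "\<And>j. a \<le> l j \<and> l j \<le> b"
  shows "opnorm (\<chi> j k. \<i> * of_real (l j - l k) * A $ j $ k) \<le> (b - a) * opnorm A"
proof -
  \<comment> \<open>Shifting l by a constant leaves the commutator unchanged; the midpoint minimises the norm of D.\<close>
  define m where "m = (a + b) / 2"
  define D where "D = diag_mat (\<lambda>j. \<i> * of_real (l j - m))"
  have "(\<chi> j k. \<i> * of_real (l j - l k) * A $ j $ k) = D ** A - A ** D"
    by (simp add: vec_eq_iff D_def diag_mat_mult_left diag_mat_mult_right algebra_simps)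
  also have "opnorm \<dots> \<le> opnorm D * opnorm A + opnorm A * opnorm D"
    by (rule order_trans[OF opnorm_diff_le add_mono[OF opnorm_mult_le opnorm_mult_le]])
  also have "\<dots> \<le> (b - a) / 2 * opnorm A + opnorm A * ((b - a) / 2)"
  proof -
    have "norm (\<i> * complex_of_real (l j - m)) \<le> (b - a) / 2" for j
    proof -
      have "\<bar>l j - m\<bar> \<le> (b - a) / 2"
        unfolding m_def abs_le_iff using l[of j] by (auto simp: field_simps)
      then show ?thesis
        by (simp only: norm_mult norm_ii norm_of_real mult_1)
    qed
    then have "opnorm D \<le> (b - a) / 2"
      unfolding D_def by (rule opnorm_diag_mat_le)
    then show ?thesis
      by (intro add_mono mult_right_mono mult_left_mono opnorm_nonneg)
  qed
  finally show ?thesis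
    by (simp add: algebra_simps)
qed

lemma abs_Re_trace_density_le_opnorm:
  fixes \<rho> B :: "'n::finite cmat"
  assumes "density_op \<rho>"
  shows "\<bar>Re (trace (\<rho> ** B))\<bar> \<le> opnorm B"
proof -
  have \<rho>: "hermitian \<rho>" and psd: "\<And>v. 0 \<le> Re (cinner v (\<rho> *v v))" and tr: "trace \<rho> = 1"
    using assms by (auto simp: density_op_def cinner_def)
  obtain Q p where Q: "unitary Q"
    and \<rho>_eq: "\<rho> = Q ** diag_mat (\<lambda>i. complex_of_real (p i)) ** cadjoint Q"
    using hermitian_unitary_diagonalization[OF \<rho>] by blast
  let ?D = "diag_mat (\<lambda>i. complex_of_real (p i))"
  define C where "C = cadjoint Q ** B ** Q"
  have trace_conj: "trace (\<rho> ** M) = trace (?D ** (cadjoint Q ** M ** Q))" for M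
    by (metis \<rho>_eq matrix_mul_assoc trace_mul_sym)
  have "?D = cadjoint Q ** \<rho> ** Q"
    by (simp add: \<rho>_eq unitary_conj_cadjoint[OF Q])
  then have p_nonneg: "0 \<le> p i" for i
    using psd[of "column i Q"] cadjoint_sandwich_nth[of Q \<rho> i i]
    by (metis Re_complex_of_real diag_mat_nth)
  have "complex_of_real (\<Sum>i\<in>UNIV. p i) = trace ?D"
    by (simp add: trace_def)
  also have "\<dots> = 1"
    using trace_conj[of "mat 1"] tr unitaryD[OF Q] by (simp add: matrix_mul_rid)
  finally have p_sum: "(\<Sum>i\<in>UNIV. p i) = 1"
    by (simp only: of_real_eq_1_iff)
  have "\<bar>Re (trace (\<rho> ** B))\<bar> = \<bar>\<Sum>i\<in>UNIV. p i * Re (C $ i $ i)\<bar>"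
    by (simp add: trace_conj trace_diag_mat_mult C_def)
  also have "\<dots> \<le> (\<Sum>i\<in>UNIV. p i * opnorm C)"
    using mult_left_mono[OF order_trans[OF abs_Re_le_cmod norm_nth_le_opnorm] p_nonneg]
    by (intro order_trans[OF sum_abs sum_mono]) (simp add: abs_mult p_nonneg)
  also have "\<dots> = opnorm B"
    using opnorm_unitary_conj[of "cadjoint Q" B] Q
    by (simp add: C_def p_sum unitary_def flip: sum_distrib_right)
  finally show ?thesis .
qed

lemma abs_Re_trace_density_unitary_conj_le:
  assumes "density_op \<rho>" and "unitary U"
  shows "\<bar>Re (trace (\<rho> ** (U ** M ** cadjoint U)))\<bar> \<le> opnorm M"
  using abs_Re_trace_density_le_opnorm[OF assms(1), of "U ** M ** cadjoint U"]
  by (simp only: opnorm_unitary_conj[OF assms(2)])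

section \<open>Functional calculus in an eigenbasis\<close>

lemma real_eigenvalues_unitary_conj:
  assumes U: "unitary U"
  shows "real_eigenvalues (U ** A ** cadjoint U) = real_eigenvalues A"
proof -
  have sub: "real_eigenvalues (V ** B ** cadjoint V) \<subseteq> real_eigenvalues B"
    if V: "unitary V" for V B :: "'a::finite cmat"
  proof
    fix x assume "x \<in> real_eigenvalues (V ** B ** cadjoint V)"
    then obtain v where "v \<noteq> 0" and v: "(V ** B ** cadjoint V) *v v = complex_of_real x *s v"
      by (auto simp: real_eigenvalues_def)
    have "V *v (cadjoint V *v v) = v"
      using unitaryD[OF V] by (simp add: matrix_vector_mul_assoc)
    with \<open>v \<noteq> 0\<close> have "cadjoint V *v v \<noteq> 0"
      by auto
    moreover have "B *v (cadjoint V *v v) = cadjoint V *v ((V ** B ** cadjoint V) *v v)"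
      by (simp add: matrix_vector_mul_assoc matrix_mul_assoc unitaryD[OF V] matrix_mul_lid)
    then have "B *v (cadjoint V *v v) = complex_of_real x *s (cadjoint V *v v)"
      by (simp add: v matrix_vector_mult_scale)
    ultimately show "x \<in> real_eigenvalues B"
      by (auto simp: real_eigenvalues_def)
  qed
  have "real_eigenvalues A \<subseteq> real_eigenvalues (U ** A ** cadjoint U)"
    using sub[OF unitary_cadjoint[OF U], of "U ** A ** cadjoint U"] unitary_conj_cadjoint[OF U]
    by simp
  with sub[OF U] show ?thesis
    by blast
qed

lemma real_eigenvalues_diag_mat:
  "real_eigenvalues (diag_mat (\<lambda>i. complex_of_real (l i)) :: 'n::finite cmat) = range l"
proof (intro equalityI subsetI)
  fix x assume "x \<in> real_eigenvalues (diag_mat (\<lambda>i. complex_of_real (l i)) :: 'n cmat)"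
  then obtain v :: "complex^'n" where "v \<noteq> 0" and v: "\<And>j. l j * v $ j = x * v $ j"
    by (auto simp: real_eigenvalues_def vec_eq_iff diag_mat_mult_vec)
  then obtain j where "v $ j \<noteq> 0"
    by (auto simp: vec_eq_iff)
  with v[of j] show "x \<in> range l"
    by auto
next
  fix x assume "x \<in> range l"
  then obtain j where "x = l j"
    by auto
  then have "diag_mat (\<lambda>i. complex_of_real (l i)) *v axis j 1 =
      complex_of_real x *s (axis j 1 :: complex^'n)"
    by (simp add: vec_eq_iff diag_mat_mult_vec axis_def)
  then show "x \<in> real_eigenvalues (diag_mat (\<lambda>i. complex_of_real (l i)) :: 'n cmat)"
    by (auto simp: real_eigenvalues_def axis_eq_0_iff intro!: exI[of _ "axis j 1"])
qed

lemma omega_max_unitary_conj_diag: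
  assumes "unitary U"
  shows "omega_max (U ** diag_mat (\<lambda>i. complex_of_real (l i)) ** cadjoint U) =
    Max (range l) - Min (range l)"
  by (simp add: omega_max_def real_eigenvalues_unitary_conj[OF assms] real_eigenvalues_diag_mat)

lemma bounded_linear_sandwich:
  fixes B C :: "'n::finite cmat"
  shows "bounded_linear (\<lambda>A. B ** A ** C)"
  by (intro linear_conv_bounded_linear[THEN iffD1] linearI)
     (simp_all add: vec_eq_iff matrix_matrix_mult_def ring_distribs sum.distrib scaleR_sum_right
       sum_distrib_left mult_ac)

lemma bounded_linear_trace_mult: "bounded_linear (\<lambda>M::'n::finite cmat. trace (A ** M))"
  by (intro linear_conv_bounded_linear[THEN iffD1] linearI)
     (simp_all add: trace_def matrix_matrix_mult_def ring_distribs sum.distrib scaleR_sum_right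
       sum_distrib_left mult_ac scaleR_conv_of_real[where 'a = complex])

lemma sandwich_diff:
  fixes B X Y C :: "'n::finite cmat"
  shows "B ** (X - Y) ** C = B ** X ** C - B ** Y ** C"
  using linear_diff[OF bounded_linear.linear[OF bounded_linear_sandwich[of B C]]] by simp

lemma sandwich_uminus:
  fixes B X C :: "'n::finite cmat"
  shows "B ** (- X) ** C = - (B ** X ** C)"
  using linear_neg[OF bounded_linear.linear[OF bounded_linear_sandwich[of B C]]] by simp

lemma cscale_sandwich_diag_mat: "cscale c (U ** diag_mat d ** V) = U ** diag_mat (\<lambda>i. c * d i) ** V"
  by (simp add: vec_eq_iff cscale_def matrix_matrix_mult_def sum_distrib_left mult_ac
      if_distrib if_distrib[of "\<lambda>x. x * _"] cong: if_cong)

lemma matpow_unitary_conj: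
  assumes "unitary U"
  shows "matpow (U ** A ** cadjoint U) k = U ** matpow A k ** cadjoint U"
proof (induction k)
  case 0
  then show ?case
    using unitaryD[OF assms] by (simp add: matrix_mul_rid)
next
  case (Suc k)
  have "matpow (U ** A ** cadjoint U) (Suc k) =
      U ** A ** (cadjoint U ** U) ** matpow A k ** cadjoint U"
    by (simp add: Suc matrix_mul_assoc)
  then show ?case
    using unitaryD[OF assms] by (simp add: matrix_mul_rid matrix_mul_assoc)
qed

lemma matpow_diag_mat: "matpow (diag_mat d) k = diag_mat (\<lambda>i. d i ^ k)"
  by (induction k) (simp_all add: diag_mat_1 diag_mat_mult_diag_mat)

lemma sums_diag_mat:
  assumes "\<And>i. (\<lambda>k. f k i) sums s i"
  shows "(\<lambda>k. diag_mat (f k)) sums diag_mat s"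
  unfolding sums_def
proof (intro vec_tendstoI)
  fix i j
  have "(\<lambda>n. (\<Sum>k<n. diag_mat (f k)) $ i $ j) = (\<lambda>n. if i = j then (\<Sum>k<n. f k i) else 0)"
    by auto
  then show "((\<lambda>n. (\<Sum>k<n. diag_mat (f k)) $ i $ j) \<longlonglongrightarrow> diag_mat s $ i $ j)"
    using assms[of i] by (auto simp: sums_def)
qed

lemma mexp_unitary_conj_diag:
  assumes U: "unitary U"
  shows "mexp (U ** diag_mat d ** cadjoint U) = U ** diag_mat (\<lambda>i. exp (d i)) ** cadjoint U"
proof -
  have "(\<lambda>k. diag_mat (\<lambda>i. d i ^ k /\<^sub>R fact k)) sums diag_mat (\<lambda>i. exp (d i))"
    by (rule sums_diag_mat) (rule exp_converges)
  from bounded_linear.sums[OF bounded_linear_sandwich this, of U "cadjoint U"]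
  have "(\<lambda>k. U ** diag_mat (\<lambda>i. d i ^ k /\<^sub>R fact k) ** cadjoint U) sums
      (U ** diag_mat (\<lambda>i. exp (d i)) ** cadjoint U)" .
  moreover have "U ** diag_mat (\<lambda>i. d i ^ k /\<^sub>R fact k) ** cadjoint U
      = (1 / fact k) *\<^sub>R matpow (U ** diag_mat d ** cadjoint U) k" for k
    unfolding matpow_unitary_conj[OF U] matpow_diag_mat
    by (simp add: vec_eq_iff matrix_matrix_mult_def scaleR_sum_right divide_inverse
        if_distrib cong: if_cong)
  ultimately show ?thesis
    unfolding mexp_def by (simp add: sums_unique[symmetric])
qed

(*
  For H = U diag(l) U^dagger and Y = U^dagger X U, the matrix U (heisenberg_deriv Y l m theta) U^dagger
  is the m-th derivative of theta |-> U_theta(X).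
*)

definition heisenberg_deriv :: "'n::finite cmat \<Rightarrow> ('n \<Rightarrow> real) \<Rightarrow> nat \<Rightarrow> real \<Rightarrow> 'n cmat" where
  "heisenberg_deriv Y l m \<theta> =
     (\<chi> j k. (\<i> * of_real (l j - l k)) ^ m * cis (\<theta> * (l j - l k)) * Y $ j $ k)"

lemma heisenberg_deriv_Suc:
  "heisenberg_deriv Y l (Suc m) \<theta> =
     (\<chi> j k. \<i> * of_real (l j - l k) * heisenberg_deriv Y l m \<theta> $ j $ k)"
  by (simp add: heisenberg_deriv_def vec_eq_iff mult_ac)

lemma conjU_unitary_conj_diag:
  assumes U: "unitary U" and H: "H = U ** diag_mat (\<lambda>i. complex_of_real (l i)) ** cadjoint U"
  shows "conjU H \<theta> X = U ** heisenberg_deriv (cadjoint U ** X ** U) l 0 \<theta> ** cadjoint U"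
proof -
  define E where "E s = diag_mat (\<lambda>i. exp (s * complex_of_real (l i)))" for s
  have "mexp (cscale s H) = U ** E s ** cadjoint U" for s
    unfolding H cscale_sandwich_diag_mat mexp_unitary_conj_diag[OF U] E_def ..
  then have "conjU H \<theta> X =
      U ** (E (\<i> * of_real \<theta>) ** (cadjoint U ** X ** U) ** E (- \<i> * of_real \<theta>)) ** cadjoint U"
    by (simp add: conjU_def matrix_mul_assoc)
  also have "E (\<i> * of_real \<theta>) ** (cadjoint U ** X ** U) ** E (- \<i> * of_real \<theta>) =
      heisenberg_deriv (cadjoint U ** X ** U) l 0 \<theta>"
    by (simp add: vec_eq_iff E_def heisenberg_deriv_def diag_mat_mult_left diag_mat_mult_right
        cis_conv_exp algebra_simps flip: exp_add)
  finally show ?thesis .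
qed

lemma has_vector_derivative_componentwise:
  fixes f :: "real \<Rightarrow> 'a::real_normed_vector^'i::finite"
  assumes "\<And>i. ((\<lambda>x. f x $ i) has_vector_derivative f' $ i) F"
  shows "(f has_vector_derivative f') F"
  using assms unfolding has_vector_derivative_def has_derivative_def
  by (auto intro!: vec_tendstoI bounded_linear_scaleR_left)

lemma has_vector_derivative_heisenberg_deriv:
  "((\<lambda>\<theta>. heisenberg_deriv Y l m \<theta>) has_vector_derivative heisenberg_deriv Y l (Suc m) t) (at t)"
proof (intro has_vector_derivative_componentwise)
  fix j k
  define c where "c = \<i> * complex_of_real (l j - l k)"
  have "((\<lambda>z. c ^ m * exp (z * c) * Y $ j $ k) has_field_derivative
      c ^ Suc m * exp (of_real t * c) * Y $ j $ k) (at (of_real t))"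
    by (auto intro!: derivative_eq_intros simp: algebra_simps)
  from has_vector_derivative_real_field[OF this]
  show "((\<lambda>\<theta>. heisenberg_deriv Y l m \<theta> $ j $ k) has_vector_derivative
      heisenberg_deriv Y l (Suc m) t $ j $ k) (at t)"
    by (simp add: heisenberg_deriv_def c_def cis_conv_exp mult_ac)
qed

lemma conjU2_unitary_conj_diag:
  assumes U: "unitary U" and H: "H = U ** diag_mat (\<lambda>i. complex_of_real (l i)) ** cadjoint U"
  shows "conjU2 H \<phi> X = U ** heisenberg_deriv (cadjoint U ** X ** U) l 2 \<phi> ** cadjoint U"
proof -
  define Y where "Y = cadjoint U ** X ** U"
  have deriv: "((\<lambda>\<theta>. U ** heisenberg_deriv Y l m \<theta> ** cadjoint U) has_vector_derivative
      U ** heisenberg_deriv Y l (Suc m) t ** cadjoint U) (at t)" for m t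
    by (rule bounded_linear.has_vector_derivative[OF bounded_linear_sandwich
          has_vector_derivative_heisenberg_deriv])
  have "(\<lambda>t. vector_derivative (\<lambda>s. conjU H s X) (at t)) =
      (\<lambda>t. U ** heisenberg_deriv Y l 1 t ** cadjoint U)"
    unfolding conjU_unitary_conj_diag[OF U H] Y_def[symmetric]
    using deriv[of 0] by (intro ext vector_derivative_at) simp
  then show ?thesis
    unfolding conjU2_def Y_def[symmetric] using deriv[of 1]
    by (simp add: vector_derivative_at numeral_2_eq_2)
qed

lemma opnorm_heisenberg_deriv_Suc_le:
  assumes "\<And>j. a \<le> l j \<and> l j \<le> b"
  shows "opnorm (heisenberg_deriv Y l (Suc m) t) \<le> (b - a) * opnorm (heisenberg_deriv Y l m t)"
  unfolding heisenberg_deriv_Suc by (rule opnorm_diag_commutator_le[OF assms])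

lemma opnorm_heisenberg_deriv_shift:
  "opnorm (heisenberg_deriv Y l m t) = opnorm (heisenberg_deriv Y l m s)"
proof -
  define E where "E = diag_mat (\<lambda>j. cis ((t - s) * l j))"
  have "heisenberg_deriv Y l m t = E ** heisenberg_deriv Y l m s ** cadjoint E"
  proof -
    have "cis ((t - s) * l j) * cis (s * (l j - l k)) * cnj (cis ((t - s) * l k)) =
        cis (t * (l j - l k))" for j k
      by (simp add: cis_cnj cis_mult algebra_simps)
    then show ?thesis
      by (simp add: vec_eq_iff E_def heisenberg_deriv_def cadjoint_diag_mat diag_mat_mult_left
          diag_mat_mult_right mult_ac)
  qed
  then show ?thesis
    using opnorm_unitary_conj[OF unitary_diag_mat_cis] by (simp add: E_def)
qed

lemma opnorm_heisenberg_deriv_add2_le: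
  "opnorm (heisenberg_deriv Y l (m + 2) t) \<le>
     (Max (range l) - Min (range l))\<^sup>2 * opnorm (heisenberg_deriv Y l m s)"
proof -
  define \<omega> where "\<omega> = Max (range l) - Min (range l)"
  have l: "Min (range l) \<le> l j \<and> l j \<le> Max (range l)" for j
    by simp
  then have "opnorm (heisenberg_deriv Y l (Suc (Suc m)) t) \<le>
      \<omega> * (\<omega> * opnorm (heisenberg_deriv Y l m t))"
    unfolding \<omega>_def
    by (intro order_trans[OF opnorm_heisenberg_deriv_Suc_le mult_left_mono]
        opnorm_heisenberg_deriv_Suc_le) (auto intro: order_trans)
  then show ?thesis
    by (simp add: \<omega>_def power2_eq_square opnorm_heisenberg_deriv_shift[of _ _ _ t s])
qed

lemma has_real_derivative_Re_trace_heisenberg_deriv: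
  "((\<lambda>\<theta>. Re (trace (\<rho> ** (U ** heisenberg_deriv Y l m \<theta> ** cadjoint U)))) has_real_derivative
     Re (trace (\<rho> ** (U ** heisenberg_deriv Y l (Suc m) t ** cadjoint U)))) (at t)"
  unfolding has_real_derivative_iff_has_vector_derivative
  using bounded_linear_compose[OF bounded_linear_Re
      bounded_linear_compose[OF bounded_linear_trace_mult bounded_linear_sandwich]]
  by (rule bounded_linear.has_vector_derivative[OF _ has_vector_derivative_heisenberg_deriv])

lemma commutator_unitary_conj_diag:
  assumes U: "unitary U" and H: "H = U ** diag_mat (\<lambda>i. complex_of_real (l i)) ** cadjoint U"
  shows "commutator H (U ** W ** cadjoint U) =
    U ** (\<chi> j k. complex_of_real (l j - l k) * W $ j $ k) ** cadjoint U"
proof -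
  let ?D = "diag_mat (\<lambda>i. complex_of_real (l i))"
  have "H ** (U ** W ** cadjoint U) = U ** (?D ** W) ** cadjoint U"
    and "(U ** W ** cadjoint U) ** H = U ** (W ** ?D) ** cadjoint U"
    using unitaryD[OF U] by (simp_all add: H matrix_mul_assoc matrix_mul_rid)
      (simp_all add: matrix_mul_rid flip: matrix_mul_assoc)
  moreover have "?D ** W - W ** ?D = (\<chi> j k. complex_of_real (l j - l k) * W $ j $ k)"
    by (simp add: vec_eq_iff diag_mat_mult_left diag_mat_mult_right algebra_simps)
  ultimately show ?thesis
    unfolding commutator_def by (simp flip: sandwich_diff)
qed

lemma double_commutator_conjU:
  assumes U: "unitary U" and H: "H = U ** diag_mat (\<lambda>i. complex_of_real (l i)) ** cadjoint U"
  shows "commutator H (commutator H (conjU H \<theta> X)) =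
    - (U ** heisenberg_deriv (cadjoint U ** X ** U) l 2 \<theta> ** cadjoint U)"
proof -
  define Y where "Y = cadjoint U ** X ** U"
  have "(\<chi> j k. complex_of_real (l j - l k) *
      (\<chi> j k. complex_of_real (l j - l k) * heisenberg_deriv Y l 0 \<theta> $ j $ k) $ j $ k) =
      - heisenberg_deriv Y l 2 \<theta>"
    by (simp add: vec_eq_iff heisenberg_deriv_def power2_eq_square algebra_simps)
  then show ?thesis
    by (simp add: sandwich_uminus conjU_unitary_conj_diag[OF U H]
        commutator_unitary_conj_diag[OF U H] flip: Y_def)
qed

section \<open>Variance of a function with bounded fourth derivative\<close>

lemma taylor3_remainder_bound:
  fixes G :: "nat \<Rightarrow> real \<Rightarrow> real"
  assumes G: "\<And>m t. (G m has_real_derivative G (Suc m) t) (at t)" and K: "\<And>t. \<bar>G 4 t\<bar> \<le> K"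
  shows "\<bar>G 0 \<theta> - (G 0 \<phi> + G 1 \<phi> * (\<theta> - \<phi>) + G 2 \<phi> / 2 * (\<theta> - \<phi>)\<^sup>2 + G 3 \<phi> / 6 * (\<theta> - \<phi>)^3)\<bar>
    \<le> K / 24 * (\<theta> - \<phi>)^4"
proof -
  define g where "g m x = G m (\<phi> + x)" for m x
  have "\<forall>m x. (g m has_real_derivative g (Suc m) x) (at x)"
    unfolding g_def using DERIV_chain2[OF G DERIV_add[OF DERIV_const DERIV_ident]] by simp
  then obtain t where
    "g 0 (\<theta> - \<phi>) = (\<Sum>m<4. g m 0 / fact m * (\<theta> - \<phi>)^m) + g 4 t / fact 4 * (\<theta> - \<phi>)^4"
    using Maclaurin_all_le[of g "g 0"] by blast
  then have "G 0 \<theta> - (G 0 \<phi> + G 1 \<phi> * (\<theta> - \<phi>) + G 2 \<phi> / 2 * (\<theta> - \<phi>)\<^sup>2 + G 3 \<phi> / 6 * (\<theta> - \<phi>)^3)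
      = G 4 (\<phi> + t) / 24 * (\<theta> - \<phi>)^4"
    by (simp add: g_def eval_nat_numeral fact_numeral)
  also have "\<bar>\<dots>\<bar> \<le> K / 24 * (\<theta> - \<phi>)^4"
    using K[of "\<phi> + t"] by (simp add: abs_mult mult_right_mono divide_right_mono)
  finally show ?thesis .
qed

lemma has_integral_of_real_deriv:
  fixes F f :: "real \<Rightarrow> real"
  assumes "a \<le> b" and "\<And>x. (F has_real_derivative f x) (at x)"
  shows "(f has_integral F b - F a) {a..b}"
  using assms by (intro fundamental_theorem_of_calculus)
    (auto simp: has_real_derivative_iff_has_vector_derivative[symmetric]
      intro: has_field_derivative_at_within)

lemma integral_square_deviation_ge_taylor:
  fixes L :: "real \<Rightarrow> real" and \<phi> r c0 c1 c2 c3 K m :: real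
  defines "P \<equiv> \<lambda>\<theta>. c0 + c1 * (\<theta> - \<phi>) + c2 / 2 * (\<theta> - \<phi>)\<^sup>2 + c3 / 6 * (\<theta> - \<phi>)^3"
  assumes r: "0 < r" and L: "continuous_on {\<phi> - r..\<phi> + r} L"
    and taylor: "\<And>\<theta>. \<bar>L \<theta> - P \<theta>\<bar> \<le> K / 24 * (\<theta> - \<phi>)^4"
  shows "2 * c2\<^sup>2 * r^5 / 45 - \<bar>c2\<bar> * K * r^7 / 90 \<le> integral {\<phi> - r..\<phi> + r} (\<lambda>\<theta>. (L \<theta> - m)\<^sup>2)"
proof -
  define I where "I = {\<phi> - r..\<phi> + r}"
  have "\<phi> - r \<le> \<phi> + r"
    using r by simp
  define h where "h \<theta> = (\<theta> - \<phi>)\<^sup>2 - r\<^sup>2 / 3" for \<theta>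
  define Q where "Q \<theta> = c2 * (P \<theta> - m) * h \<theta> - (c2 / 2)\<^sup>2 * (h \<theta>)\<^sup>2" for \<theta>
  define B where "B \<theta> = K * r\<^sup>2 / 36 * (\<theta> - \<phi>)^4" for \<theta>
  have cont: "continuous_on I Q" "continuous_on I (\<lambda>\<theta>. (L \<theta> - P \<theta>) * h \<theta>)"
    "continuous_on I (\<lambda>\<theta>. (L \<theta> - m)\<^sup>2)" "continuous_on I B"
    unfolding Q_def P_def h_def B_def I_def by (intro continuous_intros L)+
  note int = cont[THEN integrable_continuous_interval[of "\<phi> - r" "\<phi> + r", folded I_def]]
  have "Q \<theta> + c2 * ((L \<theta> - P \<theta>) * h \<theta>) \<le> (L \<theta> - m)\<^sup>2" for \<theta>
    using zero_le_power2[of "L \<theta> - m - c2 / 2 * h \<theta>"]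
    by (simp add: Q_def algebra_simps power2_eq_square)
  then have "integral I (\<lambda>\<theta>. Q \<theta> + c2 * ((L \<theta> - P \<theta>) * h \<theta>)) \<le> integral I (\<lambda>\<theta>. (L \<theta> - m)\<^sup>2)"
    using int by (intro integral_le integrable_add integrable_on_mult_right) auto
  then have "integral I Q + c2 * integral I (\<lambda>\<theta>. (L \<theta> - P \<theta>) * h \<theta>) \<le> integral I (\<lambda>\<theta>. (L \<theta> - m)\<^sup>2)"
    using int by (simp add: integral_add integrable_on_mult_right)
  moreover have "integral I Q = 2 * c2\<^sup>2 * r^5 / 45"
  proof -
    define F where "F \<theta> = (let t = \<theta> - \<phi> in
      c2 * ((c0 - m) * (t^3 / 3 - r\<^sup>2 * t / 3) + c1 * (t^4 / 4 - r\<^sup>2 * t\<^sup>2 / 6)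
        + c2 / 2 * (t^5 / 5 - r\<^sup>2 * t^3 / 9) + c3 / 6 * (t^6 / 6 - r\<^sup>2 * t^4 / 12))
      - c2\<^sup>2 / 4 * (t^5 / 5 - 2 * r\<^sup>2 * t^3 / 9 + r^4 * t / 9))" for \<theta>
    have "(F has_real_derivative Q \<theta>) (at \<theta>)" for \<theta>
      unfolding F_def Q_def P_def h_def Let_def
      by (auto intro!: derivative_eq_intros simp: field_simps eval_nat_numeral)
    from has_integral_of_real_deriv[OF \<open>\<phi> - r \<le> \<phi> + r\<close> this]
    show ?thesis
      unfolding I_def by (rule integral_unique[THEN trans])
        (simp add: F_def field_simps eval_nat_numeral)
  qed
  moreover have "\<bar>integral I (\<lambda>\<theta>. (L \<theta> - P \<theta>) * h \<theta>)\<bar> \<le> K * r^7 / 90"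
  proof -
    have "\<bar>(L \<theta> - P \<theta>) * h \<theta>\<bar> \<le> B \<theta>" if "\<theta> \<in> I" for \<theta>
    proof -
      have "(\<theta> - \<phi>)\<^sup>2 \<le> r\<^sup>2"
        using that r by (intro power2_le_iff_abs_le[THEN iffD2]) (auto simp: I_def abs_le_iff)
      then have "\<bar>h \<theta>\<bar> \<le> 2 * r\<^sup>2 / 3"
        unfolding h_def abs_le_iff using zero_le_power2[of "\<theta> - \<phi>"] by (intro conjI; linarith)
      then have "\<bar>L \<theta> - P \<theta>\<bar> * \<bar>h \<theta>\<bar> \<le> K / 24 * (\<theta> - \<phi>)^4 * (2 * r\<^sup>2 / 3)"
        using taylor[of \<theta>] order_trans[OF abs_ge_zero taylor] by (intro mult_mono) auto
      then show ?thesis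
        by (simp add: B_def abs_mult)
    qed
    then have "norm (integral I (\<lambda>\<theta>. (L \<theta> - P \<theta>) * h \<theta>)) \<le> integral I B"
      using int by (intro integral_norm_bound_integral) auto
    also have "integral I B = K * r^7 / 90"
    proof -
      have "((\<lambda>\<theta>. K * r\<^sup>2 / 180 * (\<theta> - \<phi>)^5) has_real_derivative B \<theta>) (at \<theta>)" for \<theta>
        unfolding B_def by (auto intro!: derivative_eq_intros simp: field_simps eval_nat_numeral)
      from has_integral_of_real_deriv[OF \<open>\<phi> - r \<le> \<phi> + r\<close> this]
      show ?thesis
        unfolding I_def
        by (rule integral_unique[THEN trans]) (simp add: field_simps eval_nat_numeral)
    qed
    finally show ?thesis
      by simp
  qed
  then have "\<bar>c2 * integral I (\<lambda>\<theta>. (L \<theta> - P \<theta>) * h \<theta>)\<bar> \<le> \<bar>c2\<bar> * (K * r^7 / 90)"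
    unfolding abs_mult by (rule mult_left_mono) simp
  then have "- (\<bar>c2\<bar> * (K * r^7 / 90)) \<le> c2 * integral I (\<lambda>\<theta>. (L \<theta> - P \<theta>) * h \<theta>)"
    by (simp only: abs_le_iff) linarith
  ultimately show ?thesis
    unfolding I_def by (simp add: algebra_simps)
qed

lemma integral_uniform_measure_interval:
  fixes f :: "real \<Rightarrow> real"
  assumes ab: "a < b" and f: "continuous_on UNIV f"
  shows "integral\<^sup>L (uniform_measure lborel {a..b}) f = integral {a..b} f / (b - a)"
proof -
  have "uniform_measure lborel {a..b} = density lborel (\<lambda>x. ennreal (indicator {a..b} x / (b - a)))"
    unfolding uniform_measure_def using ab
    by (intro arg_cong[where f = "density lborel"] ext)
      (auto simp: indicator_def divide_ennreal ennreal_1[symmetric] simp del: ennreal_1)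
  then have "integral\<^sup>L (uniform_measure lborel {a..b}) f =
      integral\<^sup>L lborel (\<lambda>x. (indicator {a..b} x / (b - a)) *\<^sub>R f x)"
    using ab f by (simp add: integral_density borel_measurable_continuous_onI)
  also have "\<dots> = (LINT x : {a..b} | lborel. f x) / (b - a)"
    by (simp add: set_lebesgue_integral_def)
  also have "(LINT x : {a..b} | lborel. f x) = integral {a..b} f"
    using f by (intro set_borel_integral_eq_integral(2) borel_integrable_atLeastAtMost')
      (rule continuous_on_subset, auto)
  finally show ?thesis .
qed

lemma unif_var_ge_of_taylor3:
  fixes L :: "real \<Rightarrow> real"
  assumes r: "0 < r" and L: "continuous_on UNIV L"
    and taylor: "\<And>\<theta>. \<bar>L \<theta> - (c0 + c1 * (\<theta> - \<phi>) + c2 / 2 * (\<theta> - \<phi>)\<^sup>2 + c3 / 6 * (\<theta> - \<phi>)^3)\<bar>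
      \<le> K / 24 * (\<theta> - \<phi>)^4"
  shows "r^4 / 45 * c2\<^sup>2 - \<bar>c2\<bar> * K * r^6 / 180 \<le> unif_var \<phi> r L"
proof -
  define \<mu> where "\<mu> = integral\<^sup>L (uniform_measure lborel {\<phi> - r..\<phi> + r}) L"
  have "unif_var \<phi> r L = integral {\<phi> - r..\<phi> + r} (\<lambda>\<theta>. (L \<theta> - \<mu>)\<^sup>2) / (2 * r)"
    using r L unfolding unif_var_def \<mu>_def[symmetric]
    by (subst integral_uniform_measure_interval) (auto intro!: continuous_intros)
  moreover have "2 * c2\<^sup>2 * r^5 / 45 - \<bar>c2\<bar> * K * r^7 / 90 \<le>
      integral {\<phi> - r..\<phi> + r} (\<lambda>\<theta>. (L \<theta> - \<mu>)\<^sup>2)"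
    using r continuous_on_subset[OF L] taylor by (intro integral_square_deviation_ge_taylor) auto
  ultimately have "(2 * c2\<^sup>2 * r^5 / 45 - \<bar>c2\<bar> * K * r^7 / 90) / (2 * r) \<le> unif_var \<phi> r L"
    using r by (simp add: divide_right_mono)
  moreover have "(2 * c2\<^sup>2 * r^5 / 45 - \<bar>c2\<bar> * K * r^7 / 90) / (2 * r) =
      r^4 / 45 * c2\<^sup>2 - \<bar>c2\<bar> * K * r^6 / 180"
    using r by (simp add: field_simps eval_nat_numeral)
  ultimately show ?thesis
    by simp
qed

lemma unif_var_ge_of_fourth_derivative_bound:
  fixes G :: "nat \<Rightarrow> real \<Rightarrow> real"
  assumes r: "0 < r" and G: "\<And>m t. (G m has_real_derivative G (Suc m) t) (at t)"
    and N: "\<bar>G 2 \<phi>\<bar> \<le> N" and K: "\<And>t. \<bar>G 4 t\<bar> \<le> K"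
  shows "r^4 / 45 * (G 2 \<phi>)\<^sup>2 - N * K * r^6 / 180 \<le> unif_var \<phi> r (G 0)"
proof -
  have "continuous_on UNIV (G 0)"
    using G DERIV_isCont continuous_at_imp_continuous_on by blast
  then have "r^4 / 45 * (G 2 \<phi>)\<^sup>2 - \<bar>G 2 \<phi>\<bar> * K * r^6 / 180 \<le> unif_var \<phi> r (G 0)"
    by (rule unif_var_ge_of_taylor3[OF r _ taylor3_remainder_bound[OF G K]])
  moreover have "\<bar>G 2 \<phi>\<bar> * K * r^6 / 180 \<le> N * K * r^6 / 180"
    using N r order_trans[OF abs_ge_zero K] by (intro divide_right_mono mult_right_mono) auto
  ultimately show ?thesis
    by linarith
qed

theorem corollary2:
  fixes \<rho> Obs V H :: "complex^'n^'n" and \<phi> r :: real and L :: "real \<Rightarrow> real"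
  assumes "density_op \<rho>" and "hermitian Obs" and "unitary V" and "hermitian H"
    and "\<And>\<theta>. L \<theta> = Re (trace (\<rho> ** conjU H \<theta> (cadjoint V ** Obs ** V)))"
    and "r > 0" and "4 * omega_max H * r \<le> 3"
  shows "unif_var \<phi> r L \<ge>
      r ^ 4 / 45 * (Re (trace (\<rho> ** conjU2 H \<phi> (cadjoint V ** Obs ** V)))) ^ 2
      - 2 * (omega_max H) ^ 2
          * (opnorm (commutator H (commutator H (conjU H \<phi> (cadjoint V ** Obs ** V))))) ^ 2
          / 135 * r ^ 6"
proof -
  define X where "X = cadjoint V ** Obs ** V"
  obtain U l where U: "unitary U"
    and H: "H = U ** diag_mat (\<lambda>i. complex_of_real (l i)) ** cadjoint U"
    using hermitian_unitary_diagonalization[OF \<open>hermitian H\<close>] .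
  define Y where "Y = cadjoint U ** X ** U"
  define G where "G m \<theta> = Re (trace (\<rho> ** (U ** heisenberg_deriv Y l m \<theta> ** cadjoint U)))" for m \<theta>
  define N where "N = opnorm (heisenberg_deriv Y l 2 \<phi>)"
  have G_le: "\<bar>G m t\<bar> \<le> opnorm (heisenberg_deriv Y l m t)" for m t
    unfolding G_def by (rule abs_Re_trace_density_unitary_conj_le[OF assms(1) U])
  have G4: "\<bar>G 4 t\<bar> \<le> (omega_max H)\<^sup>2 * N" for t
    using G_le[of 4 t] opnorm_heisenberg_deriv_add2_le[of Y l 2 t \<phi>]
    by (simp add: N_def H omega_max_unitary_conj_diag[OF U])
  have "r^4 / 45 * (G 2 \<phi>)\<^sup>2 - N * ((omega_max H)\<^sup>2 * N) * r^6 / 180 \<le> unif_var \<phi> r (G 0)"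
  proof (rule unif_var_ge_of_fourth_derivative_bound[where G = G, OF \<open>0 < r\<close> _ _ G4])
    show "(G m has_real_derivative G (Suc m) t) (at t)" for m t
      unfolding G_def[abs_def] by (rule has_real_derivative_Re_trace_heisenberg_deriv)
  qed (use G_le[of 2 \<phi>] in \<open>simp add: N_def\<close>)
  moreover have "G 0 = L"
    using assms(5) by (simp add: fun_eq_iff G_def conjU_unitary_conj_diag[OF U H] X_def Y_def)
  moreover have "Re (trace (\<rho> ** conjU2 H \<phi> X)) = G 2 \<phi>"
    by (simp add: G_def conjU2_unitary_conj_diag[OF U H] Y_def)
  moreover have "opnorm (commutator H (commutator H (conjU H \<phi> X))) = N"
    by (simp add: double_commutator_conjU[OF U H] opnorm_uminus opnorm_unitary_conj[OF U]
        N_def Y_def)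
  moreover have "0 \<le> (omega_max H)\<^sup>2 * N\<^sup>2 * r^6"
    by simp
  ultimately show ?thesis
    unfolding X_def[symmetric] by (simp add: power2_eq_square mult_ac)
qed

end
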